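(* Consider the family of distributions on $[0,1]$ with densities, with respect to the measure $\lambda+\delta_0+\delta_1$ (where $\lambda$ is Lebesgue measure and $\delta_c$ is the point mass at $c$), $$\mathrm{beinf}(y;\alpha,\gamma,\mu,\phi)=\begin{cases}\alpha(1-\gamma), & y=0,\\ \alpha\gamma, & y=1,\\ (1-\alpha)f(y;\mu,\phi), & y\in(0,1),\end{cases}$$ indexed by $(\alpha,\gamma,\mu,\phi)\in(0,1)\times(0,1)\times(0,1)\times(0,\infty)$, where $$f(y;\mu,\phi)=\frac{\Gamma(\phi)}{\Gamma(\mu\phi)\Gamma((1-\mu)\phi)}\,y^{\mu\phi-1}(1-y)^{(1-\mu)\phi-1},\quad y\in(0,1),$$ is the beta density with mean $\mu$ and precision $\phi$ (the zero-and-one-inflated beta distribution $\mathrm{BEINF}(\alpha,\gamma,\mu,\phi)$). Then this family is a four-parameter exponential family of full rank.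
   Context: A family of densities $\{p_\theta:\theta\in\Theta\}$ with respect to a measure $\nu$ on a space $\mathcal Y$ is called a $k$-parameter exponential family of full rank if there are a one-to-one map $\theta\mapsto\eta(\theta)\in\mathbb R^k$, a statistic $T=(t_1,\dots,t_k):\mathcal Y\to\mathbb R^k$, a real function $B^*$ and a positive function $h$ on $\mathcal Y$ such that $p_\theta(y)=\exp\{\eta(\theta)^\top T(y)-B^*(\eta(\theta))\}h(y)$ for all $y$ and $\theta$, where neither the components $t_1,\dots,t_k$ nor the components of $\eta$ satisfy a linear constraint, and the set $\{\eta(\theta):\theta\in\Theta\}$ contains a $k$-dimensional open rectangle. *)

theory Defs
  imports "HOL-Probability.Probability" "HOL-Library.Numeral_Type"
begin

definition nu_beinf :: "real measure" where
  "nu_beinf = measure_of {0..1} (sets (restrict_space lborel {0..1}))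
     (\<lambda>A. emeasure lborel A + indicator A 0 + indicator A 1)"

definition beta_mp_density :: "real \<Rightarrow> real \<Rightarrow> real \<Rightarrow> real" where
  "beta_mp_density mu phi y =
     Gamma phi / (Gamma (mu * phi) * Gamma ((1 - mu) * phi))
       * y powr (mu * phi - 1) * (1 - y) powr ((1 - mu) * phi - 1)"

definition beinf :: "real \<times> real \<times> real \<times> real \<Rightarrow> real \<Rightarrow> real" where
  "beinf \<theta> y = (case \<theta> of (\<alpha>, \<gamma>, \<mu>, \<phi>) \<Rightarrow>
     (if y = 0 then \<alpha> * (1 - \<gamma>)
      else if y = 1 then \<alpha> * \<gamma>
      else (1 - \<alpha>) * beta_mp_density \<mu> \<phi> y))"

definition beinf_params :: "(real \<times> real \<times> real \<times> real) set" where
  "beinf_params = {0<..<1} \<times> {0<..<1} \<times> {0<..<1} \<times> {0<..}"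

text \<open>k-parameter exponential family of full rank, k = CARD('n).
  Linear constraints are affine relations c . v = d with c \<noteq> 0; for T they
  are required to fail nu-almost everywhere (the standard reading).\<close>
definition exp_family_full_rank ::
  "'y measure \<Rightarrow> 'a set \<Rightarrow> ('a \<Rightarrow> 'y \<Rightarrow> real) \<Rightarrow> 'n::finite itself \<Rightarrow> bool" where
  "exp_family_full_rank \<nu> \<Theta> p _ \<longleftrightarrow>
    (\<exists>(\<eta> :: 'a \<Rightarrow> real^'n) (T :: 'y \<Rightarrow> real^'n) (B :: real^'n \<Rightarrow> real) (h :: 'y \<Rightarrow> real).
       inj_on \<eta> \<Theta> \<and>
       (\<forall>y\<in>space \<nu>. h y > 0) \<and>
       (\<forall>\<theta>\<in>\<Theta>. \<forall>y\<in>space \<nu>. p \<theta> y = exp (\<eta> \<theta> \<bullet> T y - B (\<eta> \<theta>)) * h y) \<and>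
       \<not> (\<exists>c d. c \<noteq> 0 \<and> (AE y in \<nu>. c \<bullet> T y = d)) \<and>
       \<not> (\<exists>c d. c \<noteq> 0 \<and> (\<forall>\<theta>\<in>\<Theta>. c \<bullet> \<eta> \<theta> = d)) \<and>
       (\<exists>a b. (\<forall>i. a $ i < b $ i) \<and> box a b \<subseteq> \<eta> ` \<Theta>))"

end

theory Submission imports Defs begin

text \<open>Writing \<open>C(\<mu>,\<phi>)\<close> for the beta normalising constant, on \<open>[0,1]\<close> the BEINF density is
  \<open>exp (\<eta> \<bullet> T y) \<cdot> (1 - \<alpha>) C(\<mu>,\<phi>) \<cdot> h y\<close> with the statistic
  \<open>T y = (1{y=0}, 1{y=1}, 1{0<y<1} ln y, 1{0<y<1} ln (1-y))\<close>, base density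
  \<open>h y = 1/(y(1-y))\<close> on \<open>(0,1)\<close> and \<open>1\<close> at the endpoints, and natural parameter
  \<open>\<eta> = (ln (\<alpha>(1-\<gamma>)/((1-\<alpha>)C)), ln (\<alpha>\<gamma>/((1-\<alpha>)C)), \<mu>\<phi>, (1-\<mu>)\<phi>)\<close>.
  The map \<open>\<theta> \<mapsto> \<eta>\<close> is a bijection from the parameter space onto the open set
  \<open>{\<eta>. \<eta>\<^sub>3 > 0 \<and> \<eta>\<^sub>4 > 0}\<close>; its inverse is explicit. An affine relation among the \<open>\<eta>\<close>
  would hold on that open set and is therefore trivial. An affine relation among the
  components of \<open>T\<close> valid almost everywhere must hold at the atoms \<open>0\<close> and \<open>1\<close>, and, by
  continuity, everywhere on \<open>(0,1)\<close>, where \<open>ln y\<close> and \<open>ln (1-y)\<close> are affinely independent.\<close>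

lemma countably_additive_emeasure_add_indicators:
  assumes "\<A> \<subseteq> sets M"
  shows "countably_additive \<A> (\<lambda>A. emeasure M A + indicator A a + indicator A b)"
  unfolding countably_additive_def
proof (intro allI impI)
  fix A :: "nat \<Rightarrow> 'a set"
  assume "range A \<subseteq> \<A>" "disjoint_family A"
  then have A: "range A \<subseteq> sets M" "disjoint_family A"
    using assms by auto
  have "(\<Sum>i. emeasure M (A i) + indicator (A i) a + indicator (A i) b) =
      (\<Sum>i. emeasure M (A i)) + (\<Sum>i. indicator (A i) a) + (\<Sum>i. indicator (A i) b :: ennreal)"
    by (simp add: suminf_add[symmetric])
  also have "\<dots> = emeasure M (\<Union> (range A)) + indicator (\<Union> (range A)) a + indicator (\<Union> (range A)) b"
    using suminf_indicator[OF A(2)] suminf_emeasure[OF A] by simp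
  finally show "(\<Sum>i. emeasure M (A i) + indicator (A i) a + indicator (A i) b) =
      emeasure M (\<Union> (range A)) + indicator (\<Union> (range A)) a + indicator (\<Union> (range A)) b" .
qed

lemma sets_restrict_lborel_unit_interval:
  "A \<in> sets (restrict_space lborel {0..1::real}) \<longleftrightarrow> A \<subseteq> {0..1} \<and> A \<in> sets borel"
  by (subst sets_restrict_space_iff) auto

lemma sigma_algebra_restrict_lborel_unit_interval:
  "sigma_algebra {0..1::real} (sets (restrict_space lborel {0..1}))"
  using sets.sigma_algebra_axioms[of "restrict_space lborel {0..1::real}"]
  by (simp add: space_restrict_space)

lemma space_nu_beinf: "space nu_beinf = {0..1}"
  unfolding nu_beinf_def
  by (subst space_measure_of) (auto simp: sets_restrict_lborel_unit_interval subset_eq)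

lemma sets_nu_beinf: "sets nu_beinf = sets (restrict_space lborel {0..1::real})"
  unfolding nu_beinf_def
  by (rule sigma_algebra.sets_measure_of_eq[OF sigma_algebra_restrict_lborel_unit_interval])

lemma emeasure_nu_beinf:
  assumes "A \<in> sets nu_beinf"
  shows "emeasure nu_beinf A = emeasure lborel A + indicator A 0 + indicator A 1"
  unfolding nu_beinf_def
proof (rule emeasure_measure_of_sigma[OF sigma_algebra_restrict_lborel_unit_interval])
  show "positive (sets (restrict_space lborel {0..1::real}))
      (\<lambda>A. emeasure lborel A + indicator A 0 + indicator A 1)"
    by (simp add: positive_def)
  show "countably_additive (sets (restrict_space lborel {0..1::real}))
      (\<lambda>A. emeasure lborel A + indicator A 0 + indicator A 1)"
    by (rule countably_additive_emeasure_add_indicators) (auto simp: sets_restrict_space_iff)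
  show "A \<in> sets (restrict_space lborel {0..1})"
    using assms unfolding sets_nu_beinf .
qed

lemma AE_nu_beinf_D:
  assumes "AE y in nu_beinf. P y"
  shows "P 0" "P 1" "AE y in lborel. y \<in> {0..1} \<longrightarrow> P y"
proof -
  from assms obtain N where N: "{y \<in> space nu_beinf. \<not> P y} \<subseteq> N" "N \<in> null_sets nu_beinf"
    by (auto simp: eventually_ae_filter)
  have "N \<in> sets borel"
    using null_setsD2[OF N(2)] sets_restrict_lborel_unit_interval by (simp add: sets_nu_beinf)
  moreover have "emeasure lborel N + indicator N 0 + indicator N 1 = 0"
    using emeasure_nu_beinf[OF null_setsD2[OF N(2)]] null_setsD1[OF N(2)] by simp
  ultimately have "N \<in> null_sets lborel" "0 \<notin> N" "1 \<notin> N"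
    by (auto simp: indicator_def split: if_splits)
  moreover have outside: "P y" if "y \<notin> N" "y \<in> {0..1}" for y
    using N(1) that by (auto simp: space_nu_beinf)
  ultimately show "P 0" "P 1"
    by simp_all
  show "AE y in lborel. y \<in> {0..1} \<longrightarrow> P y"
    using AE_not_in[OF \<open>N \<in> null_sets lborel\<close>] by eventually_elim (simp add: outside)
qed

lemma continuous_on_AE_lborel_eq:
  fixes f :: "'a::euclidean_space \<Rightarrow> 'b::t1_space"
  assumes "open S" "continuous_on S f" "AE x in lborel. x \<in> S \<longrightarrow> f x = c" "x \<in> S"
  shows "f x = c"
proof (rule ccontr)
  assume "f x \<noteq> c"
  then obtain e where "e > 0" and e: "\<And>y. dist x y < e \<Longrightarrow> f y \<noteq> c"
    using continuous_on_open_avoid[OF assms(2,1,4)] by blast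
  from assms(3) obtain N where N: "{y. \<not> (y \<in> S \<longrightarrow> f y = c)} \<subseteq> N" "N \<in> null_sets lborel"
    by (auto simp: eventually_ae_filter)
  have "S \<inter> ball x e \<subseteq> N"
  proof
    fix y
    assume y: "y \<in> S \<inter> ball x e"
    then have "f y \<noteq> c"
      using e by simp
    then show "y \<in> N"
      using N(1) y by auto
  qed
  moreover have "negligible N"
    using N(2) by (simp add: negligible_iff_null_sets null_sets_completionI)
  ultimately have "negligible (S \<inter> ball x e)"
    by (rule negligible_subset[rotated])
  moreover have "open (S \<inter> ball x e)" "S \<inter> ball x e \<noteq> {}"
    using assms(1,4) \<open>e > 0\<close> by auto
  ultimately show False
    using open_not_negligible by blast
qed

lemma inner_const_on_open_imp_zero:
  fixes c :: "'a::real_inner"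
  assumes "open U" "x \<in> U" "\<forall>v\<in>U. c \<bullet> v = d"
  shows "c = 0"
proof -
  obtain e where "e > 0" "ball x e \<subseteq> U"
    using assms(1,2) by (rule openE)
  have "norm c + 1 > 0"
    by (simp add: add_nonneg_pos)
  define t where "t = e / 2 / (norm c + 1)"
  have "t > 0"
    using \<open>e > 0\<close> \<open>norm c + 1 > 0\<close> by (simp add: t_def)
  have "dist x (x + t *\<^sub>R c) = t * norm c"
    using \<open>t > 0\<close> by (simp add: dist_norm)
  also have "\<dots> \<le> t * (norm c + 1)"
    using \<open>t > 0\<close> by simp
  also have "\<dots> = e / 2"
    using \<open>norm c + 1 > 0\<close> by (simp add: t_def field_simps)
  also have "\<dots> < e"
    using \<open>e > 0\<close> by simp
  finally have "x + t *\<^sub>R c \<in> U"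
    using \<open>ball x e \<subseteq> U\<close> by auto
  then have "c \<bullet> (x + t *\<^sub>R c) = c \<bullet> x"
    using assms(2,3) by simp
  then show "c = 0"
    using \<open>t > 0\<close> by (simp add: inner_add_right)
qed

lemma ln_combination_const_imp_zero:
  fixes a b d :: real
  assumes "\<forall>y\<in>{0<..<1}. a * ln y + b * ln (1 - y) = d"
  shows "a = 0" "b = 0"
proof -
  have ln4: "ln (4::real) = 2 * ln 2"
    using ln_realpow[of 2 2] by simp
  have "ln (3::real) < ln 4" "0 < ln (3::real)"
    by simp_all
  then have ln3: "ln (3::real) \<noteq> 2 * ln 2" "ln (3::real) \<noteq> 0"
    using ln4 by simp_all
  have "a * ln (1/2) + b * ln (1/2) = d" "a * ln (1/4) + b * ln (3/4) = d"
       "a * ln (3/4) + b * ln (1/4) = d"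
    using assms[rule_format, of "1/2"] assms[rule_format, of "1/4"] assms[rule_format, of "3/4"]
    by simp_all
  then have half: "- (a + b) * ln 2 = d"
    and quarter: "- 2 * a * ln 2 + b * (ln 3 - 2 * ln 2) = d"
    and three_quarters: "a * (ln 3 - 2 * ln 2) - 2 * b * ln 2 = d"
    by (simp_all add: ln_div ln4 algebra_simps)
  have "(b - a) * ln 3 = 0"
    using quarter three_quarters by (simp add: algebra_simps)
  then have "a = b"
    using ln3 by simp
  moreover have "a * (ln 3 - 2 * ln 2) = 0"
    using half quarter \<open>a = b\<close> by (simp add: algebra_simps)
  ultimately show "a = 0" "b = 0"
    using ln3 by simp_all
qed

lemma vector_4_nth [simp]:
  "(vector [x, y, z, w] :: 'a::zero^4) $ 1 = x"
  "(vector [x, y, z, w] :: 'a::zero^4) $ 2 = y"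
  "(vector [x, y, z, w] :: 'a::zero^4) $ 3 = z"
  "(vector [x, y, z, w] :: 'a::zero^4) $ 4 = w"
  unfolding vector_def by simp_all

lemma inner_vec_4: "(x :: real^4) \<bullet> y = x$1 * y$1 + x$2 * y$2 + x$3 * y$3 + x$4 * y$4"
  by (simp add: inner_vec_def sum_4)

definition beta_mp_norm :: "real \<Rightarrow> real \<Rightarrow> real" where
  "beta_mp_norm \<mu> \<phi> = Gamma \<phi> / (Gamma (\<mu> * \<phi>) * Gamma ((1 - \<mu>) * \<phi>))"

lemma beta_mp_norm_pos: "0 < \<mu> \<Longrightarrow> \<mu> < 1 \<Longrightarrow> 0 < \<phi> \<Longrightarrow> 0 < beta_mp_norm \<mu> \<phi>"
  unfolding beta_mp_norm_def by (intro divide_pos_pos mult_pos_pos Gamma_real_pos) auto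

definition beinf_eta :: "real \<times> real \<times> real \<times> real \<Rightarrow> real^4" where
  "beinf_eta \<theta> = (case \<theta> of (\<alpha>, \<gamma>, \<mu>, \<phi>) \<Rightarrow>
     vector [ln (\<alpha> / (1 - \<alpha>) * (1 - \<gamma>) / beta_mp_norm \<mu> \<phi>),
             ln (\<alpha> / (1 - \<alpha>) * \<gamma> / beta_mp_norm \<mu> \<phi>), \<mu> * \<phi>, (1 - \<mu>) * \<phi>])"

definition beinf_eta_inv :: "real^4 \<Rightarrow> real \<times> real \<times> real \<times> real" where
  "beinf_eta_inv v =
     (let \<phi> = v$3 + v$4; \<mu> = v$3 / \<phi>;
          odds = (exp (v$1) + exp (v$2)) * beta_mp_norm \<mu> \<phi>
      in (odds / (1 + odds), exp (v$2) / (exp (v$1) + exp (v$2)), \<mu>, \<phi>))"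

definition beinf_stat :: "real \<Rightarrow> real^4" where
  "beinf_stat y = vector [if y = 0 then 1 else 0, if y = 1 then 1 else 0,
     if 0 < y \<and> y < 1 then ln y else 0, if 0 < y \<and> y < 1 then ln (1 - y) else 0]"

definition beinf_base :: "real \<Rightarrow> real" where
  "beinf_base y = (if 0 < y \<and> y < 1 then 1 / (y * (1 - y)) else 1)"

definition beinf_log_partition :: "real \<times> real \<times> real \<times> real \<Rightarrow> real" where
  "beinf_log_partition \<theta> = (case \<theta> of (\<alpha>, \<gamma>, \<mu>, \<phi>) \<Rightarrow> - ln ((1 - \<alpha>) * beta_mp_norm \<mu> \<phi>))"

lemma beinf_params_iff:
  "(\<alpha>, \<gamma>, \<mu>, \<phi>) \<in> beinf_params \<longleftrightarrow> 0 < \<alpha> \<and> \<alpha> < 1 \<and> 0 < \<gamma> \<and> \<gamma> < 1 \<and> 0 < \<mu> \<and> \<mu> < 1 \<and> 0 < \<phi>"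
  by (auto simp: beinf_params_def)

lemma beinf_exp_family_form:
  assumes "\<theta> \<in> beinf_params" "y \<in> {0..1}"
  shows "beinf \<theta> y = exp (beinf_eta \<theta> \<bullet> beinf_stat y - beinf_log_partition \<theta>) * beinf_base y"
proof -
  obtain \<alpha> \<gamma> \<mu> \<phi> where \<theta>: "\<theta> = (\<alpha>, \<gamma>, \<mu>, \<phi>)"
    by (cases \<theta>) auto
  have par: "0 < \<alpha>" "\<alpha> < 1" "0 < \<gamma>" "\<gamma> < 1" "0 < \<mu>" "\<mu> < 1" "0 < \<phi>"
    using assms(1) by (simp_all add: \<theta> beinf_params_iff)
  define C where "C = beta_mp_norm \<mu> \<phi>"
  have "C > 0"
    using beta_mp_norm_pos par by (simp add: C_def)
  have "exp (- beinf_log_partition \<theta>) = (1 - \<alpha>) * C"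
    using par \<open>C > 0\<close> by (simp add: \<theta> beinf_log_partition_def C_def)
  then have split: "exp (beinf_eta \<theta> \<bullet> beinf_stat y - beinf_log_partition \<theta>) =
      exp (beinf_eta \<theta> \<bullet> beinf_stat y) * ((1 - \<alpha>) * C)"
    by (simp only: diff_conv_add_uminus exp_add)
  consider "y = 0" | "y = 1" | "0 < y \<and> y < 1"
    using assms(2) by force
  then show ?thesis
  proof cases
    case 1
    have "exp (beinf_eta \<theta> \<bullet> beinf_stat y) = \<alpha> / (1 - \<alpha>) * (1 - \<gamma>) / C"
      using 1 par \<open>C > 0\<close> by (simp add: inner_vec_4 beinf_stat_def \<theta> beinf_eta_def C_def)
    then show ?thesis
      using 1 par \<open>C > 0\<close> unfolding split by (simp add: beinf_base_def beinf_def \<theta>)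
  next
    case 2
    have "exp (beinf_eta \<theta> \<bullet> beinf_stat y) = \<alpha> / (1 - \<alpha>) * \<gamma> / C"
      using 2 par \<open>C > 0\<close> by (simp add: inner_vec_4 beinf_stat_def \<theta> beinf_eta_def C_def)
    then show ?thesis
      using 2 par \<open>C > 0\<close> unfolding split by (simp add: beinf_base_def beinf_def \<theta>)
  next
    case 3
    have "exp (beinf_eta \<theta> \<bullet> beinf_stat y) * beinf_base y =
        exp (\<mu> * \<phi> * ln y + (1 - \<mu>) * \<phi> * ln (1 - y) - ln y - ln (1 - y))"
      using 3 by (simp add: inner_vec_4 beinf_stat_def beinf_base_def \<theta> beinf_eta_def exp_diff)
    also have "\<dots> = exp ((\<mu> * \<phi> - 1) * ln y) * exp (((1 - \<mu>) * \<phi> - 1) * ln (1 - y))"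
      by (simp add: exp_add[symmetric] algebra_simps)
    also have "\<dots> = y powr (\<mu> * \<phi> - 1) * (1 - y) powr ((1 - \<mu>) * \<phi> - 1)"
      using 3 by (simp add: powr_def)
    finally show ?thesis
      using 3 unfolding split by (simp add: beinf_def \<theta> beta_mp_density_def C_def beta_mp_norm_def mult_ac)
  qed
qed

lemma beinf_eta_inv_eta:
  assumes "\<theta> \<in> beinf_params"
  shows "beinf_eta_inv (beinf_eta \<theta>) = \<theta>"
proof -
  obtain \<alpha> \<gamma> \<mu> \<phi> where \<theta>: "\<theta> = (\<alpha>, \<gamma>, \<mu>, \<phi>)"
    by (cases \<theta>) auto
  have par: "0 < \<alpha>" "\<alpha> < 1" "0 < \<gamma>" "\<gamma> < 1" "0 < \<mu>" "\<mu> < 1" "0 < \<phi>"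
    using assms by (simp_all add: \<theta> beinf_params_iff)
  define v where "v = beinf_eta \<theta>"
  define C where "C = beta_mp_norm \<mu> \<phi>"
  define k where "k = \<alpha> / (1 - \<alpha>) / C"
  have "C > 0" "k > 0"
    using beta_mp_norm_pos par by (simp_all add: C_def k_def)
  have exp_v: "exp (v$1) = k * (1 - \<gamma>)" "exp (v$2) = k * \<gamma>"
    using par \<open>C > 0\<close> by (simp_all add: v_def \<theta> beinf_eta_def C_def k_def)
  then have sum: "exp (v$1) + exp (v$2) = k"
    by (simp add: algebra_simps)
  have \<phi>: "v$3 + v$4 = \<phi>"
    by (simp add: v_def \<theta> beinf_eta_def algebra_simps)
  have \<mu>: "v$3 / \<phi> = \<mu>"
    using par by (simp add: v_def \<theta> beinf_eta_def)
  have "k * C / (1 + k * C) = \<alpha>"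
    using par \<open>C > 0\<close> by (simp add: k_def field_simps)
  moreover have "exp (v$2) / k = \<gamma>"
    using \<open>k > 0\<close> by (simp add: exp_v)
  ultimately show ?thesis
    unfolding v_def[symmetric] by (simp add: beinf_eta_inv_def Let_def \<phi> \<mu> sum C_def[symmetric] \<theta>)
qed

lemma beinf_eta_inv_mem_params:
  assumes "0 < v$3" "0 < v$4"
  shows "beinf_eta_inv v \<in> beinf_params"
proof -
  have "0 < beta_mp_norm (v$3 / (v$3 + v$4)) (v$3 + v$4)"
    using assms by (intro beta_mp_norm_pos) (simp_all add: field_simps)
  then show ?thesis
    using assms
    by (simp add: beinf_eta_inv_def Let_def beinf_params_iff field_simps add_pos_pos)
qed

lemma beinf_eta_eta_inv:
  assumes "0 < v$3" "0 < v$4"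
  shows "beinf_eta (beinf_eta_inv v) = v"
proof -
  define \<phi> where "\<phi> = v$3 + v$4"
  define \<mu> where "\<mu> = v$3 / \<phi>"
  define C where "C = beta_mp_norm \<mu> \<phi>"
  define E where "E = exp (v$1) + exp (v$2)"
  define \<alpha> where "\<alpha> = E * C / (1 + E * C)"
  define \<gamma> where "\<gamma> = exp (v$2) / E"
  have "\<phi> > 0" "C > 0" "E > 0"
    using assms beta_mp_norm_pos[of \<mu> \<phi>]
    by (simp_all add: \<phi>_def \<mu>_def C_def E_def field_simps add_pos_pos)
  have inv: "beinf_eta_inv v = (\<alpha>, \<gamma>, \<mu>, \<phi>)"
    by (simp add: beinf_eta_inv_def Let_def \<phi>_def \<mu>_def C_def E_def \<alpha>_def \<gamma>_def)
  have "1 + E * C > 0"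
    using \<open>C > 0\<close> \<open>E > 0\<close> by (simp add: add_pos_pos)
  then have "1 - \<alpha> = 1 / (1 + E * C)" "\<alpha> = E * C / (1 + E * C)"
    by (simp_all add: \<alpha>_def field_simps)
  then have odds: "\<alpha> / (1 - \<alpha>) = E * C"
    using \<open>1 + E * C > 0\<close> by simp
  have "1 - \<gamma> = exp (v$1) / E"
    using \<open>E > 0\<close> by (simp add: \<gamma>_def E_def field_simps)
  then have "\<alpha> / (1 - \<alpha>) * (1 - \<gamma>) / C = exp (v$1)" "\<alpha> / (1 - \<alpha>) * \<gamma> / C = exp (v$2)"
    using \<open>C > 0\<close> \<open>E > 0\<close> by (simp_all add: odds \<gamma>_def)
  moreover have "\<mu> * \<phi> = v$3" "(1 - \<mu>) * \<phi> = v$4"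
    using \<open>\<phi> > 0\<close> by (simp_all add: \<mu>_def \<phi>_def field_simps)
  ultimately show ?thesis
    by (simp add: inv beinf_eta_def vec_eq_iff forall_4 C_def[symmetric])
qed

lemma inj_on_beinf_eta: "inj_on beinf_eta beinf_params"
  using beinf_eta_inv_eta by (rule inj_on_inverseI)

lemma beinf_eta_image: "beinf_eta ` beinf_params = {v. 0 < v$3 \<and> 0 < v$4}"
proof
  show "beinf_eta ` beinf_params \<subseteq> {v. 0 < v$3 \<and> 0 < v$4}"
    by (auto simp: beinf_params_def beinf_eta_def)
  show "{v. 0 < v$3 \<and> 0 < v$4} \<subseteq> beinf_eta ` beinf_params"
    using beinf_eta_eta_inv beinf_eta_inv_mem_params by (force intro: image_eqI[symmetric])
qed

lemma open_beinf_eta_image: "open (beinf_eta ` beinf_params)"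
  unfolding beinf_eta_image by (intro open_Collect_conj open_Collect_less continuous_intros)

lemma beinf_stat_no_affine_relation:
  "\<not> (\<exists>c d. c \<noteq> 0 \<and> (AE y in nu_beinf. c \<bullet> beinf_stat y = d))"
proof
  assume "\<exists>c d. c \<noteq> 0 \<and> (AE y in nu_beinf. c \<bullet> beinf_stat y = d)"
  then obtain c :: "real^4" and d where "c \<noteq> 0" and ae: "AE y in nu_beinf. c \<bullet> beinf_stat y = d"
    by blast
  have "c$1 = d" "c$2 = d"
    using AE_nu_beinf_D(1,2)[OF ae] by (simp_all add: beinf_stat_def inner_vec_4)
  have "AE y in lborel. y \<in> {0<..<1} \<longrightarrow> c$3 * ln y + c$4 * ln (1 - y) = d"
    using AE_nu_beinf_D(3)[OF ae] by eventually_elim (auto simp: beinf_stat_def inner_vec_4)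
  moreover have "continuous_on {0<..<1} (\<lambda>y. c$3 * ln y + c$4 * ln (1 - y))"
    by (intro continuous_intros) auto
  ultimately have on_interior: "\<forall>y\<in>{0<..<1}. c$3 * ln y + c$4 * ln (1 - y) = d"
    using continuous_on_AE_lborel_eq[OF open_greaterThanLessThan] by blast
  then have "c$3 = 0" "c$4 = 0"
    by (rule ln_combination_const_imp_zero)+
  moreover have "d = 0"
    using on_interior[rule_format, of "1/2"] \<open>c$3 = 0\<close> \<open>c$4 = 0\<close> by simp
  ultimately have "c = 0"
    using \<open>c$1 = d\<close> \<open>c$2 = d\<close> by (simp add: vec_eq_iff forall_4)
  with \<open>c \<noteq> 0\<close> show False ..
qed

lemma beinf_eta_no_affine_relation:
  "\<not> (\<exists>c d. c \<noteq> 0 \<and> (\<forall>\<theta>\<in>beinf_params. c \<bullet> beinf_eta \<theta> = d))"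
proof
  assume "\<exists>c d. c \<noteq> 0 \<and> (\<forall>\<theta>\<in>beinf_params. c \<bullet> beinf_eta \<theta> = d)"
  then obtain c :: "real^4" and d where "c \<noteq> 0" and "\<forall>v\<in>beinf_eta ` beinf_params. c \<bullet> v = d"
    by blast
  moreover have "vector [0, 0, 1, 1] \<in> beinf_eta ` beinf_params"
    by (simp add: beinf_eta_image)
  ultimately show False
    using inner_const_on_open_imp_zero[OF open_beinf_eta_image] by blast
qed

lemma beinf_eta_image_contains_box:
  "box (vector [0, 0, 1, 1]) (vector [1, 1, 2, 2]) \<subseteq> beinf_eta ` beinf_params"
  by (auto simp: beinf_eta_image mem_box_cart forall_4)

theorem proposition2:
  shows "exp_family_full_rank nu_beinf beinf_params beinf TYPE(4)"
  unfolding exp_family_full_rank_def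
proof (intro exI[of _ beinf_eta] exI[of _ beinf_stat] exI[of _ beinf_base] conjI
    exI[of _ "beinf_log_partition \<circ> beinf_eta_inv"])
  show "inj_on beinf_eta beinf_params"
    by (rule inj_on_beinf_eta)
  show "\<forall>y\<in>space nu_beinf. beinf_base y > 0"
    by (auto simp: beinf_base_def)
  show "\<forall>\<theta>\<in>beinf_params. \<forall>y\<in>space nu_beinf. beinf \<theta> y =
      exp (beinf_eta \<theta> \<bullet> beinf_stat y - (beinf_log_partition \<circ> beinf_eta_inv) (beinf_eta \<theta>)) * beinf_base y"
    by (simp add: space_nu_beinf beinf_exp_family_form beinf_eta_inv_eta)
  show "\<not> (\<exists>c d. c \<noteq> 0 \<and> (AE y in nu_beinf. c \<bullet> beinf_stat y = d))"
    by (rule beinf_stat_no_affine_relation)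
  show "\<not> (\<exists>c d. c \<noteq> 0 \<and> (\<forall>\<theta>\<in>beinf_params. c \<bullet> beinf_eta \<theta> = d))"
    by (rule beinf_eta_no_affine_relation)
  show "\<exists>a b. (\<forall>i. a $ i < b $ i) \<and> box a b \<subseteq> beinf_eta ` beinf_params"
    using beinf_eta_image_contains_box by (intro exI conjI) (auto simp: forall_4)
qed

end
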